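(* Let $A \in M_n(\mathbb{C})$ be a normal matrix (i.e. $AA^*=A^*A$) which is $r_A$-row regular. Then $A$ is also $r_A$-column regular; in particular, $A$ is a semimagic square.
   Context: An $n\times n$ complex matrix $A=(a_{ij})$ is $r_A$-row regular if $\sum_{j=1}^n a_{ij}=r_A$ for every row $i$, and $c_A$-column regular if $\sum_{i=1}^n a_{ij}=c_A$ for every column $j$. A semimagic square is a matrix that is both $r_A$-row regular and $c_A$-column regular with $r_A=c_A$. $A^*$ denotes the conjugate transpose. *)

theory Defs
  imports "HOL-Analysis.Analysis"
begin

definition conj_transpose :: "complex^'n^'n \<Rightarrow> complex^'n^'n" where
  "conj_transpose A = (\<chi> i j. cnj (A $ j $ i))"

definition row_regular :: "complex^'n^'n \<Rightarrow> complex \<Rightarrow> bool" where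
  "row_regular A r \<longleftrightarrow> (\<forall>i. (\<Sum>j\<in>UNIV. A $ i $ j) = r)"

definition column_regular :: "complex^'n^'n \<Rightarrow> complex \<Rightarrow> bool" where
  "column_regular A c \<longleftrightarrow> (\<forall>j. (\<Sum>i\<in>UNIV. A $ i $ j) = c)"

definition semimagic :: "complex^'n^'n \<Rightarrow> bool" where
  "semimagic A \<longleftrightarrow> (\<exists>r c. row_regular A r \<and> column_regular A c \<and> r = c)"

end

theory Submission
  imports Defs
begin

(* Row regularity says that the all-ones vector 1 satisfies A 1 = r 1. A normal matrix B
   satisfies <Bx, Bx> = <B*x, B*x>, so B and B* have the same kernel; applied to the normal
   matrix B = A - r I this gives A* 1 = cnj r 1, which is column regularity with sum r. *)

definition normal_matrix :: "complex^'n^'n \<Rightarrow> bool" where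
  "normal_matrix A \<longleftrightarrow> A ** conj_transpose A = conj_transpose A ** A"

definition cinner :: "complex^'n \<Rightarrow> complex^'n \<Rightarrow> complex" where
  "cinner x y = (\<Sum>i\<in>UNIV. x $ i * cnj (y $ i))"

lemma conj_transpose_conj_transpose [simp]: "conj_transpose (conj_transpose A) = A"
  by (simp add: conj_transpose_def vec_eq_iff)

lemma conj_transpose_diff_mat: "conj_transpose (A - mat c) = conj_transpose A - mat (cnj c)"
  by (simp add: conj_transpose_def mat_def vec_eq_iff)

lemma mat_matrix_vector_mult: "mat c *v x = c *s x"
  by (simp add: mat_def matrix_vector_mult_def vec_eq_iff if_distrib if_distribR cong: if_cong)

lemma matrix_mult_diff_mat_component:
  fixes A B :: "'a::comm_ring_1^'n^'n"
  shows "((A - mat c) ** (B - mat d)) $ i $ k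
    = (A ** B) $ i $ k - A $ i $ k * d - c * B $ i $ k + (if i = k then c * d else 0)"
  by (simp add: matrix_matrix_mult_def mat_def left_diff_distrib right_diff_distrib
      sum_subtractf sum.distrib if_distrib[where f="\<lambda>x. x * _"] if_distrib[where f="\<lambda>x. _ * x"]
      cong: if_cong)

lemma normal_matrix_diff_mat:
  assumes "normal_matrix A"
  shows "normal_matrix (A - mat c)"
proof -
  have "(A ** conj_transpose A) $ i $ k = (conj_transpose A ** A) $ i $ k" for i k
    using assms by (simp add: normal_matrix_def)
  then show ?thesis
    unfolding normal_matrix_def conj_transpose_diff_mat
    by (simp add: vec_eq_iff matrix_mult_diff_mat_component)
qed

lemma cinner_matrix_vector_mult: "cinner (A *v x) y = cinner x (conj_transpose A *v y)"
  unfolding cinner_def matrix_vector_mult_def conj_transpose_def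
  by (simp add: sum_distrib_left sum_distrib_right mult_ac) (rule sum.swap)

lemma cinner_self_eq_0_iff: "cinner x x = 0 \<longleftrightarrow> x = 0"
proof -
  have "cinner x x = of_real (\<Sum>i\<in>UNIV. (cmod (x $ i))\<^sup>2)"
    by (simp only: cinner_def of_real_sum complex_norm_square)
  then show ?thesis
    by (simp add: sum_nonneg_eq_0_iff vec_eq_iff del: of_real_sum)
qed

lemma normal_matrix_cinner_self:
  assumes "normal_matrix A"
  shows "cinner (A *v x) (A *v x) = cinner (conj_transpose A *v x) (conj_transpose A *v x)"
proof -
  have "cinner (A *v x) (A *v x) = cinner x ((conj_transpose A ** A) *v x)"
    by (simp add: cinner_matrix_vector_mult matrix_vector_mul_assoc)
  also have "\<dots> = cinner x ((A ** conj_transpose A) *v x)"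
    using assms by (simp add: normal_matrix_def)
  also have "\<dots> = cinner (conj_transpose A *v x) (conj_transpose A *v x)"
    using cinner_matrix_vector_mult[of "conj_transpose A" x "conj_transpose A *v x"]
    by (simp add: matrix_vector_mul_assoc)
  finally show ?thesis .
qed

lemma normal_matrix_kernel_conj_transpose:
  assumes "normal_matrix A" and "A *v x = 0"
  shows "conj_transpose A *v x = 0"
proof -
  have "cinner (conj_transpose A *v x) (conj_transpose A *v x) = 0"
    using normal_matrix_cinner_self[OF assms(1), of x] assms(2) by (simp add: cinner_def)
  then show ?thesis
    by (simp add: cinner_self_eq_0_iff)
qed

lemma normal_matrix_eigenvector_conj_transpose:
  assumes "normal_matrix A" and "A *v x = c *s x"
  shows "conj_transpose A *v x = cnj c *s x"
proof -
  have "(A - mat c) *v x = 0"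
    using assms(2) by (simp add: matrix_vector_mult_diff_rdistrib mat_matrix_vector_mult)
  then have "(conj_transpose A - mat (cnj c)) *v x = 0"
    using normal_matrix_kernel_conj_transpose[OF normal_matrix_diff_mat[OF assms(1)]]
    by (simp add: conj_transpose_diff_mat)
  then show ?thesis
    by (simp add: matrix_vector_mult_diff_rdistrib mat_matrix_vector_mult)
qed

lemma row_regular_iff_eigenvector: "row_regular A r \<longleftrightarrow> A *v vec 1 = r *s vec 1"
  by (simp add: row_regular_def matrix_vector_mult_def vec_eq_iff)

lemma column_regular_iff_row_regular_conj_transpose:
  "column_regular A c \<longleftrightarrow> row_regular (conj_transpose A) (cnj c)"
  by (simp add: column_regular_def row_regular_def conj_transpose_def flip: cnj_sum)

theorem mainTheorem2:
  fixes A :: "complex^'n^'n" and r :: complex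
  assumes "A ** conj_transpose A = conj_transpose A ** A"
    and "row_regular A r"
  shows "column_regular A r \<and> semimagic A"
proof -
  have normal: "normal_matrix A"
    using assms(1) by (simp add: normal_matrix_def)
  have "A *v vec 1 = r *s vec 1"
    using assms(2) by (simp add: row_regular_iff_eigenvector)
  then have "conj_transpose A *v vec 1 = cnj r *s vec 1"
    by (rule normal_matrix_eigenvector_conj_transpose[OF normal])
  then have "column_regular A r"
    by (simp add: column_regular_iff_row_regular_conj_transpose row_regular_iff_eigenvector)
  with assms(2) show ?thesis
    by (auto simp: semimagic_def)
qed

end
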